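(* Let $\alpha=(\alpha_1,\alpha_2,\alpha_3)\in\mathbb{C}^3$ and $\beta=(\beta_1,\beta_2,\beta_3)\in\mathbb{C}^3$ both satisfy the triangle inequality. Then there exists an automorphism $\varphi\in\operatorname{Aut}(\mathbb{D}^3)$ of the tridisc such that $\varphi(M_\alpha)=M_\beta$.
   Context: $\mathbb{D}$ denotes the open unit disc in $\mathbb{C}$. For $\alpha=(\alpha_1,\alpha_2,\alpha_3)\in\mathbb{C}^3\setminus\{0\}$ let $$M_\alpha=\{(z_1,z_2,z_3)\in\mathbb{D}^3:\ \alpha_1z_1+\alpha_2z_2+\alpha_3z_3=\overline{\alpha_1}z_2z_3+\overline{\alpha_2}z_1z_3+\overline{\alpha_3}z_1z_2\}.$$ A triple $\alpha\in\mathbb{C}^3$ satisfies the triangle inequality if $|\alpha_i|+|\alpha_j|>|\alpha_k|$ for every permutation $(i,j,k)$ of $(1,2,3)$. *)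

theory Defs
  imports "HOL-Analysis.Analysis"
begin

definition tridisc :: "(complex^3) set" where
  "tridisc = {z. \<forall>i. norm (z$i) < 1}"

definition M_set :: "complex^3 \<Rightarrow> (complex^3) set" where
  "M_set a = {z \<in> tridisc.
     a$1 * z$1 + a$2 * z$2 + a$3 * z$3
       = cnj (a$1) * z$2 * z$3 + cnj (a$2) * z$1 * z$3 + cnj (a$3) * z$1 * z$2}"

definition triangle_ineq :: "complex^3 \<Rightarrow> bool" where
  "triangle_ineq a \<longleftrightarrow>
     (\<forall>i j k::3. i \<noteq> j \<and> j \<noteq> k \<and> i \<noteq> k \<longrightarrow> norm (a$i) + norm (a$j) > norm (a$k))"

definition holomorphic3_on :: "(complex^3 \<Rightarrow> complex^3) \<Rightarrow> (complex^3) set \<Rightarrow> bool" where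
  "holomorphic3_on f S \<longleftrightarrow>
     (\<forall>z\<in>S. \<exists>L. (f has_derivative L) (at z) \<and> (\<forall>(c::complex) x. L (c *s x) = c *s L x))"

definition Aut_tridisc :: "(complex^3 \<Rightarrow> complex^3) set" where
  "Aut_tridisc = {\<phi>. bij_betw \<phi> tridisc tridisc \<and> holomorphic3_on \<phi> tridisc
                       \<and> holomorphic3_on (inv_into tridisc \<phi>) tridisc}"

end

theory Submission
  imports Defs "HOL-Complex_Analysis.Riemann_Mapping"
begin

text \<open>If \<open>\<alpha>\<close> satisfies the triangle inequality, a product of disc automorphisms maps \<open>M\<^sub>\<alpha>\<close>
  onto \<open>M\<^sub>1\<close>, \<open>1 = (1,1,1)\<close>; composing such a map for \<open>\<alpha>\<close> with the inverse of one for \<open>\<beta>\<close>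
  gives the theorem. Writing \<open>\<alpha>\<^sub>j = r\<^sub>j u\<^sub>j\<close> with \<open>r\<^sub>j > 0\<close> and \<open>|u\<^sub>j| = 1\<close>, the rotation
  \<open>z\<^sub>j \<mapsto> c u\<^sub>j z\<^sub>j\<close> with \<open>c = cnj (u\<^sub>1 u\<^sub>2 u\<^sub>3)\<close> multiplies the defining polynomial by \<open>c\<close> and
  replaces \<open>\<alpha>\<close> by \<open>r\<close>. The real Moebius maps \<open>w \<mapsto> (w + t\<^sub>j)/(1 + t\<^sub>j w)\<close> pull the polynomial
  of \<open>M\<^sub>1\<close> back to that of \<open>M\<^sub>a\<close>, \<open>a\<^sub>1 = (1 + t\<^sub>1)(1 - t\<^sub>2 t\<^sub>3)\<close> and cyclically, up to a nonvanishing
  factor, provided \<open>t\<^sub>1 + t\<^sub>2 + t\<^sub>3 = t\<^sub>1 t\<^sub>2 + t\<^sub>1 t\<^sub>3 + t\<^sub>2 t\<^sub>3\<close>. The triangle inequality for \<open>r\<close> is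
  what allows such \<open>t \<in> (-1,1)\<^sup>3\<close> with \<open>a\<close> a positive multiple of \<open>r\<close>.\<close>

abbreviation disc :: "complex set" where
  "disc \<equiv> ball 0 1"

definition disc_automorphism :: "(complex \<Rightarrow> complex) \<Rightarrow> bool" where
  "disc_automorphism g \<longleftrightarrow>
     bij_betw g disc disc \<and> g holomorphic_on disc \<and> inv_into disc g holomorphic_on disc"

definition prod_map :: "(3 \<Rightarrow> complex \<Rightarrow> complex) \<Rightarrow> complex^3 \<Rightarrow> complex^3" where
  "prod_map G z = (\<chi> j. G j (z$j))"

definition M_poly :: "complex^3 \<Rightarrow> complex^3 \<Rightarrow> complex" where
  "M_poly a z = a$1 * z$1 + a$2 * z$2 + a$3 * z$3
     - (cnj (a$1) * z$2 * z$3 + cnj (a$2) * z$1 * z$3 + cnj (a$3) * z$1 * z$2)"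

lemma mem_tridisc_iff: "z \<in> tridisc \<longleftrightarrow> (\<forall>j. z$j \<in> disc)"
  by (simp add: tridisc_def)

lemma M_set_eq: "M_set a = {z \<in> tridisc. M_poly a z = 0}"
  by (auto simp: M_set_def M_poly_def)

lemma open_tridisc: "open tridisc"
proof -
  have tridisc_eq: "tridisc = (\<Inter>j\<in>UNIV. (\<lambda>z. z$j) -` disc)"
    by (auto simp: mem_tridisc_iff)
  show ?thesis
    unfolding tridisc_eq by (intro open_INT ballI open_vimage_vec_nth) simp_all
qed

subsection \<open>Automorphisms of the disc\<close>

lemma disc_automorphismI:
  assumes "\<And>z. z \<in> disc \<Longrightarrow> f z \<in> disc" "\<And>z. z \<in> disc \<Longrightarrow> g z \<in> disc"
    and "\<And>z. z \<in> disc \<Longrightarrow> g (f z) = z" "\<And>z. z \<in> disc \<Longrightarrow> f (g z) = z"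
    and "f holomorphic_on disc" "g holomorphic_on disc"
  shows "disc_automorphism f"
proof -
  have bij: "bij_betw f disc disc"
    by (rule bij_betw_byWitness[where f'=g]) (use assms in auto)
  have "inv_into disc f z = g z" if "z \<in> disc" for z
    by (metis assms(2-4) bij bij_betw_imp_inj_on inv_into_f_f that)
  then have "inv_into disc f holomorphic_on disc"
    using holomorphic_cong assms(6) by blast
  then show ?thesis
    unfolding disc_automorphism_def using bij assms(5) by blast
qed

lemma disc_automorphismD:
  assumes "disc_automorphism f" "z \<in> disc"
  shows "f z \<in> disc" "inv_into disc f z \<in> disc"
    and "inv_into disc f (f z) = z" "f (inv_into disc f z) = z"
proof -
  have bij: "bij_betw f disc disc"
    using assms(1) by (simp add: disc_automorphism_def)
  show "f z \<in> disc" "inv_into disc f z \<in> disc"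
    using bij bij_betw_inv_into assms(2) bij_betwE by blast+
  show "inv_into disc f (f z) = z" "f (inv_into disc f z) = z"
    using bij assms(2) by (simp_all add: bij_betw_def inv_into_f_f f_inv_into_f)
qed

lemma disc_automorphism_holomorphic:
  assumes "disc_automorphism f"
  shows "f holomorphic_on disc" "inv_into disc f holomorphic_on disc"
  using assms by (auto simp: disc_automorphism_def)

lemma disc_automorphism_inv_into:
  "disc_automorphism f \<Longrightarrow> disc_automorphism (inv_into disc f)"
  by (rule disc_automorphismI[where g=f])
    (use disc_automorphismD[of f] disc_automorphism_holomorphic[of f] in blast)+

lemma disc_automorphism_comp:
  assumes f: "disc_automorphism f" and g: "disc_automorphism g"
  shows "disc_automorphism (g \<circ> f)"
proof (rule disc_automorphismI[where g="inv_into disc f \<circ> inv_into disc g"])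
  show "(g \<circ> f) holomorphic_on disc"
    by (rule holomorphic_on_compose_gen[OF disc_automorphism_holomorphic(1)[OF f]
        disc_automorphism_holomorphic(1)[OF g]]) (use disc_automorphismD(1)[OF f] in auto)
  show "(inv_into disc f \<circ> inv_into disc g) holomorphic_on disc"
    by (rule holomorphic_on_compose_gen[OF disc_automorphism_holomorphic(2)[OF g]
        disc_automorphism_holomorphic(2)[OF f]]) (use disc_automorphismD(2)[OF g] in auto)
qed (use disc_automorphismD[OF f] disc_automorphismD[OF g] in auto)

lemma disc_automorphism_rotation:
  assumes "norm c = 1"
  shows "disc_automorphism (\<lambda>z. c * z)"
proof (rule disc_automorphismI[where g="\<lambda>z. cnj c * z"])
  have "cnj c * c = 1"
    using complex_norm_square[of c] assms by (simp add: mult.commute)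
  then show "\<And>z. cnj c * (c * z) = z" "\<And>z. c * (cnj c * z) = z"
    by (metis mult.assoc mult.commute mult_1)+
qed (auto simp: norm_mult assms intro!: holomorphic_intros)

lemma disc_automorphism_Moebius_function:
  assumes "norm w < 1"
  shows "disc_automorphism (Moebius_function 0 w)"
proof (rule disc_automorphismI[where g="Moebius_function 0 (-w)"])
  have "norm (-w) < 1" using assms by simp
  with assms show "Moebius_function 0 w holomorphic_on disc"
    and "Moebius_function 0 (-w) holomorphic_on disc"
    by (simp_all add: Moebius_function_holomorphic)
  fix z assume "z \<in> disc"
  with assms \<open>norm (-w) < 1\<close> show "Moebius_function 0 w z \<in> disc"
    and "Moebius_function 0 (-w) z \<in> disc"
    and "Moebius_function 0 (-w) (Moebius_function 0 w z) = z"
    and "Moebius_function 0 w (Moebius_function 0 (-w) z) = z"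
    by (simp_all add: Moebius_function_norm_lt_1 Moebius_function_compose)
qed

subsection \<open>Product maps of the tridisc\<close>

lemma holomorphic3_on_prod_map:
  assumes "\<And>j. G j holomorphic_on disc"
  shows "holomorphic3_on (prod_map G) tridisc"
  unfolding holomorphic3_on_def
proof
  fix z assume z: "z \<in> tridisc"
  have bl_axis: "bounded_linear (axis j :: complex \<Rightarrow> complex^3)" for j
    by (simp add: linear_conv_bounded_linear[symmetric] linearI axis_def vec_eq_iff)
  have "((\<lambda>z. axis j (G j (z$j))) has_derivative (\<lambda>h. axis j (deriv (G j) (z$j) * h$j))) (at z)"
    for j
  proof -
    have "(G j has_field_derivative deriv (G j) (z$j)) (at (z$j))"
      using assms z by (meson holomorphic_derivI open_ball mem_tridisc_iff)
    then have "(G j has_derivative (\<lambda>x. deriv (G j) (z$j) * x)) (at (z$j))"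
      by (rule has_field_derivative_imp_has_derivative)
    from has_derivative_compose[OF bounded_linear_imp_has_derivative[OF bounded_linear_vec_nth] this]
    have "((\<lambda>z. G j (z$j)) has_derivative (\<lambda>h. deriv (G j) (z$j) * h$j)) (at z)"
      by (simp add: o_def)
    then show ?thesis
      using bounded_linear.has_derivative[OF bl_axis] by blast
  qed
  moreover have "prod_map G = (\<lambda>z. \<Sum>j\<in>UNIV. axis j (G j (z$j)))"
    by (simp add: fun_eq_iff prod_map_def vec_eq_iff axis_def sum.If_cases)
  ultimately have "(prod_map G has_derivative (\<lambda>h. \<Sum>j\<in>UNIV. axis j (deriv (G j) (z$j) * h$j))) (at z)"
    by (auto intro: has_derivative_sum)
  moreover have "(\<Sum>j\<in>UNIV. axis j (deriv (G j) (z$j) * (c *s h)$j))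
      = c *s (\<Sum>j\<in>UNIV. axis j (deriv (G j) (z$j) * h$j))" for c h
    by (simp add: vec_eq_iff axis_def sum.If_cases)
  ultimately show "\<exists>L. (prod_map G has_derivative L) (at z) \<and> (\<forall>(c::complex) x. L (c *s x) = c *s L x)"
    by blast
qed

lemma holomorphic3_on_cong:
  assumes "holomorphic3_on f S" "open S" "\<And>x. x \<in> S \<Longrightarrow> f x = g x"
  shows "holomorphic3_on g S"
  unfolding holomorphic3_on_def
proof
  fix z assume z: "z \<in> S"
  then obtain L where L: "(f has_derivative L) (at z)" "\<forall>(c::complex) x. L (c *s x) = c *s L x"
    using assms(1) unfolding holomorphic3_on_def by blast
  have "(g has_derivative L) (at z)"
    by (rule has_derivative_transform_within_open[OF L(1) assms(2) z]) (use assms(3) in auto)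
  with L(2) show "\<exists>L. (g has_derivative L) (at z) \<and> (\<forall>(c::complex) x. L (c *s x) = c *s L x)"
    by blast
qed

lemma prod_map_mem_tridisc:
  "(\<And>j. disc_automorphism (G j)) \<Longrightarrow> z \<in> tridisc \<Longrightarrow> prod_map G z \<in> tridisc"
  using disc_automorphismD(1) unfolding mem_tridisc_iff prod_map_def by simp

lemma prod_map_inv_into:
  assumes "\<And>j. disc_automorphism (G j)" "z \<in> tridisc"
  shows "prod_map (\<lambda>j. inv_into disc (G j)) (prod_map G z) = z"
    and "prod_map G (prod_map (\<lambda>j. inv_into disc (G j)) z) = z"
  using assms by (simp_all add: mem_tridisc_iff prod_map_def disc_automorphismD vec_eq_iff)

lemma prod_map_comp: "prod_map (\<lambda>j. H j \<circ> G j) = prod_map H \<circ> prod_map G"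
  by (simp add: prod_map_def fun_eq_iff)

lemma prod_map_in_Aut_tridisc:
  assumes G: "\<And>j. disc_automorphism (G j)"
  shows "prod_map G \<in> Aut_tridisc"
proof -
  let ?H = "\<lambda>j. inv_into disc (G j)"
  have H: "disc_automorphism (?H j)" for j
    using G disc_automorphism_inv_into by blast
  have bij: "bij_betw (prod_map G) tridisc tridisc"
    by (rule bij_betw_byWitness[where f'="prod_map ?H"])
      (use prod_map_mem_tridisc prod_map_inv_into G H in auto)
  have inv_eq: "prod_map ?H y = inv_into tridisc (prod_map G) y" if "y \<in> tridisc" for y
    by (metis prod_map_mem_tridisc prod_map_inv_into(2) G H bij bij_betw_imp_inj_on inv_into_f_f that)
  have "holomorphic3_on (inv_into tridisc (prod_map G)) tridisc"
    by (rule holomorphic3_on_cong[OF holomorphic3_on_prod_map open_tridisc inv_eq])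
      (use disc_automorphism_holomorphic H in auto)
  moreover have "holomorphic3_on (prod_map G) tridisc"
    by (rule holomorphic3_on_prod_map) (use disc_automorphism_holomorphic G in auto)
  ultimately show ?thesis
    using bij unfolding Aut_tridisc_def by blast
qed

lemma prod_map_image_eq:
  assumes G: "\<And>j. disc_automorphism (G j)" and "A \<subseteq> tridisc" "B \<subseteq> tridisc"
    and "\<And>z. z \<in> tridisc \<Longrightarrow> prod_map G z \<in> B \<longleftrightarrow> z \<in> A"
  shows "prod_map G ` A = B"
proof
  show "prod_map G ` A \<subseteq> B" using assms(2,4) by auto
  show "B \<subseteq> prod_map G ` A"
  proof
    fix y assume y: "y \<in> B"
    let ?z = "prod_map (\<lambda>j. inv_into disc (G j)) y"
    have "y \<in> tridisc" using y assms(3) by auto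
    then have z: "?z \<in> tridisc" and y_eq: "prod_map G ?z = y"
      using prod_map_mem_tridisc[OF disc_automorphism_inv_into[OF G]] prod_map_inv_into(2)[OF G]
      by auto
    have "?z \<in> A"
      using assms(4)[OF z] y unfolding y_eq by blast
    with y_eq[symmetric] show "y \<in> prod_map G ` A" by (rule image_eqI)
  qed
qed

lemma prod_map_inv_into_image:
  assumes "\<And>j. disc_automorphism (G j)" "A \<subseteq> tridisc"
  shows "prod_map (\<lambda>j. inv_into disc (G j)) ` prod_map G ` A = A"
proof -
  have "(\<lambda>z. prod_map (\<lambda>j. inv_into disc (G j)) (prod_map G z)) ` A = (\<lambda>z. z) ` A"
    using prod_map_inv_into(1)[OF assms(1)] assms(2) by (intro image_cong) auto
  then show ?thesis by (simp add: image_image)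
qed

subsection \<open>The defining polynomial under rotations and Moebius maps\<close>

lemma M_poly_rotate:
  fixes u a z :: "complex^3"
  assumes "\<And>j. norm (u$j) = 1"
  defines "c \<equiv> cnj (u$1 * u$2 * u$3)"
  shows "M_poly a (\<chi> j. c * u$j * z$j) = c * M_poly (\<chi> j. a$j * u$j) z"
proof -
  have "u$j * cnj (u$j) = 1" for j
    using complex_norm_square[of "u$j"] assms(1) by simp
  \<comment> \<open>so \<open>c u\<^sub>2 u\<^sub>3 = cnj u\<^sub>1\<close>, and cyclically\<close>
  from this[of 1] this[of 2] this[of 3] show ?thesis
    unfolding M_poly_def c_def by simp algebra
qed

lemma Moebius_triple_identity:
  fixes t1 t2 t3 w1 w2 w3 :: complex
  assumes "t1 + t2 + t3 = t1*t2 + t1*t3 + t2*t3"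
    and "1 + t1*w1 \<noteq> 0" "1 + t2*w2 \<noteq> 0" "1 + t3*w3 \<noteq> 0"
  defines "m1 \<equiv> (w1 + t1) / (1 + t1*w1)" and "m2 \<equiv> (w2 + t2) / (1 + t2*w2)"
    and "m3 \<equiv> (w3 + t3) / (1 + t3*w3)"
  shows "m1 + m2 + m3 - (m2*m3 + m1*m3 + m1*m2)
    = ((1+t1)*(1-t2*t3)*(w1 - w2*w3) + (1+t2)*(1-t1*t3)*(w2 - w1*w3) + (1+t3)*(1-t1*t2)*(w3 - w1*w2))
      / ((1 + t1*w1) * (1 + t2*w2) * (1 + t3*w3))"
proof -
  have "N1/E1 + N2/E2 + N3/E3 - (N2/E2*(N3/E3) + N1/E1*(N3/E3) + N1/E1*(N2/E2))
      = (N1*E2*E3 + N2*E1*E3 + N3*E1*E2 - (E1*N2*N3 + E2*N1*N3 + E3*N1*N2)) / (E1*E2*E3)"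
    if "E1 \<noteq> 0" "E2 \<noteq> 0" "E3 \<noteq> 0" for N1 N2 N3 E1 E2 E3 :: complex
    using that by (simp add: field_simps)
  moreover have "(w1 + t1)*(1 + t2*w2)*(1 + t3*w3) + (w2 + t2)*(1 + t1*w1)*(1 + t3*w3)
      + (w3 + t3)*(1 + t1*w1)*(1 + t2*w2)
    - ((1 + t1*w1)*(w2 + t2)*(w3 + t3) + (1 + t2*w2)*(w1 + t1)*(w3 + t3)
      + (1 + t3*w3)*(w1 + t1)*(w2 + t2))
    = (1+t1)*(1-t2*t3)*(w1 - w2*w3) + (1+t2)*(1-t1*t3)*(w2 - w1*w3) + (1+t3)*(1-t1*t2)*(w3 - w1*w2)"
    using assms(1) by algebra
  ultimately show ?thesis
    using assms(2-4) unfolding m1_def m2_def m3_def by metis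
qed

lemma Moebius_parameters_exist:
  fixes r1 r2 r3 :: real
  assumes "r1 < r2 + r3" "r2 < r1 + r3" "r3 < r1 + r2"
  obtains t1 t2 t3 \<kappa> where "\<bar>t1\<bar> < 1" "\<bar>t2\<bar> < 1" "\<bar>t3\<bar> < 1"
    "t1 + t2 + t3 = t1*t2 + t1*t3 + t2*t3" "\<kappa> > 0"
    "(1+t1)*(1-t2*t3) = \<kappa>*r1" "(1+t2)*(1-t1*t3) = \<kappa>*r2" "(1+t3)*(1-t1*t2) = \<kappa>*r3"
proof -
  \<comment> \<open>Put \<open>t\<^sub>j = (1 - s\<^sub>j)/(1 + s\<^sub>j)\<close>: then \<open>a\<^sub>1\<close> is proportional to \<open>s\<^sub>2 + s\<^sub>3\<close>, so \<open>s\<close> is a multiple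
    \<open>\<mu> p\<close> of the solution \<open>p\<close> of \<open>p\<^sub>2 + p\<^sub>3 = r\<^sub>1, \<dots>\<close>, and the constraint on \<open>t\<close> becomes
    \<open>s\<^sub>1 + s\<^sub>2 + s\<^sub>3 = 3 s\<^sub>1 s\<^sub>2 s\<^sub>3\<close>, which fixes \<open>\<mu>\<close>.\<close>
  define p1 p2 p3 where "p1 = (r2 + r3 - r1)/2" "p2 = (r1 + r3 - r2)/2" "p3 = (r1 + r2 - r3)/2"
  have p: "p1 > 0" "p2 > 0" "p3 > 0"
    using assms unfolding p1_p2_p3_def by auto
  define \<mu> where "\<mu> = sqrt ((p1 + p2 + p3) / (3 * (p1*p2*p3)))"
  have \<mu>: "\<mu> > 0" "\<mu>^2 * (3 * (p1*p2*p3)) = p1 + p2 + p3"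
    using p by (simp_all add: \<mu>_def)
  define s1 s2 s3 where "s1 = \<mu>*p1" "s2 = \<mu>*p2" "s3 = \<mu>*p3"
  have s: "s1 > 0" "s2 > 0" "s3 > 0"
    using p \<mu> by (simp_all add: s1_s2_s3_def)
  have sum_eq_prod: "s1 + s2 + s3 = 3 * s1 * s2 * s3"
    using \<mu>(2) unfolding s1_s2_s3_def by (simp add: power2_eq_square algebra_simps)
  have pair_sums: "s2 + s3 = \<mu>*r1" "s1 + s3 = \<mu>*r2" "s1 + s2 = \<mu>*r3"
    unfolding s1_s2_s3_def p1_p2_p3_def by (simp_all add: field_simps)
  define t1 t2 t3 where "t1 = (1-s1)/(1+s1)" "t2 = (1-s2)/(1+s2)" "t3 = (1-s3)/(1+s3)"
  have t: "(1+s1)*t1 = 1-s1" "(1+s2)*t2 = 1-s2" "(1+s3)*t3 = 1-s3"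
    using s unfolding t1_t2_t3_def by simp_all
  define D where "D = (1+s1)*(1+s2)*(1+s3)"
  have D: "D > 0"
    using s by (simp add: D_def)
  have "D * (t1 + t2 + t3 - (t1*t2 + t1*t3 + t2*t3)) = 2 * (s1 + s2 + s3 - 3 * s1 * s2 * s3)"
    using t unfolding D_def by algebra
  then have "t1 + t2 + t3 = t1*t2 + t1*t3 + t2*t3"
    using D sum_eq_prod by simp
  moreover have "D * ((1+t1)*(1-t2*t3)) = 4*(s2+s3)" "D * ((1+t2)*(1-t1*t3)) = 4*(s1+s3)"
      "D * ((1+t3)*(1-t1*t2)) = 4*(s1+s2)"
    using t unfolding D_def by algebra+
  then have "(1+t1)*(1-t2*t3) = 4*\<mu>/D*r1" "(1+t2)*(1-t1*t3) = 4*\<mu>/D*r2"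
      "(1+t3)*(1-t1*t2) = 4*\<mu>/D*r3"
    using D unfolding pair_sums by (simp_all add: field_simps)
  moreover have "\<bar>t1\<bar> < 1" "\<bar>t2\<bar> < 1" "\<bar>t3\<bar> < 1"
    using s by (simp_all add: t1_t2_t3_def abs_less_iff field_simps)
  moreover have "4*\<mu>/D > 0"
    using \<mu> D by simp
  ultimately show thesis
    using that by blast
qed

subsection \<open>Reduction to \<open>M\<^sub>1\<close>\<close>

lemma triangle_ineq_norms:
  assumes "triangle_ineq a"
  shows "norm (a$1) < norm (a$2) + norm (a$3)" "norm (a$2) < norm (a$1) + norm (a$3)"
    and "norm (a$3) < norm (a$1) + norm (a$2)"
proof -
  have "norm (a$k) < norm (a$i) + norm (a$j)" if "i \<noteq> j" "j \<noteq> k" "i \<noteq> k" for i j k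
    using assms that unfolding triangle_ineq_def by blast
  from this[of 2 3 1] this[of 1 3 2] this[of 1 2 3] show
    "norm (a$1) < norm (a$2) + norm (a$3)" "norm (a$2) < norm (a$1) + norm (a$3)"
    "norm (a$3) < norm (a$1) + norm (a$2)"
    by simp_all
qed

lemma prod_map_rotation_onto_M_set_norms:
  assumes "\<And>j. \<alpha>$j \<noteq> 0"
  obtains G where "\<And>j. disc_automorphism (G j)"
    and "prod_map G ` M_set \<alpha> = M_set (\<chi> j. of_real (norm (\<alpha>$j)))"
proof -
  define u where "u = (\<chi> j. \<alpha>$j / of_real (norm (\<alpha>$j)))"
  have u: "norm (u$j) = 1" for j
    using assms by (simp add: u_def norm_divide)
  have \<alpha>_eq: "\<alpha> = (\<chi> j. of_real (norm (\<alpha>$j)) * u$j)"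
    using assms by (simp add: u_def vec_eq_iff)
  define c where "c = cnj (u$1 * u$2 * u$3)"
  have "norm c = 1"
    by (simp add: c_def norm_mult u)
  define G where "G j = (\<lambda>z. c * u$j * z)" for j
  have G: "disc_automorphism (G j)" for j
    unfolding G_def using \<open>norm c = 1\<close> u by (intro disc_automorphism_rotation) (simp add: norm_mult)
  have "M_poly (\<chi> j. of_real (norm (\<alpha>$j))) (prod_map G z) = c * M_poly \<alpha> z" for z
    unfolding G_def prod_map_def c_def M_poly_rotate[OF u] by (subst (2) \<alpha>_eq) simp
  then have "prod_map G ` M_set \<alpha> = M_set (\<chi> j. of_real (norm (\<alpha>$j)))"
    using prod_map_mem_tridisc[of G, OF G] \<open>norm c = 1\<close>
    by (intro prod_map_image_eq G) (auto simp: M_set_eq)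
  with G that show thesis by blast
qed

lemma prod_map_Moebius_onto_M_set_one:
  fixes r :: "real^3"
  assumes "r$1 < r$2 + r$3" "r$2 < r$1 + r$3" "r$3 < r$1 + r$2"
  obtains G where "\<And>j. disc_automorphism (G j)" "prod_map G ` M_set (\<chi> j. of_real (r$j)) = M_set 1"
proof -
  obtain t1 t2 t3 \<kappa> where t_lt: "\<bar>t1\<bar> < 1" "\<bar>t2\<bar> < 1" "\<bar>t3\<bar> < 1"
    and t_eq: "t1 + t2 + t3 = t1*t2 + t1*t3 + t2*t3" and \<kappa>: "\<kappa> > 0"
    and coeffs: "(1+t1)*(1-t2*t3) = \<kappa>*r$1" "(1+t2)*(1-t1*t3) = \<kappa>*r$2" "(1+t3)*(1-t1*t2) = \<kappa>*r$3"
    using Moebius_parameters_exist[OF assms] by blast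
  define t :: "real^3" where "t = vector [t1, t2, t3]"
  have "\<bar>t$1\<bar> < 1" "\<bar>t$2\<bar> < 1" "\<bar>t$3\<bar> < 1"
    using t_lt by (simp_all add: t_def)
  then have t_abs: "\<bar>t$j\<bar> < 1" for j
    using exhaust_3[of j] by (elim disjE) simp_all
  define G where "G j = Moebius_function 0 (- of_real (t$j))" for j
  have G: "disc_automorphism (G j)" for j
    unfolding G_def using t_abs by (intro disc_automorphism_Moebius_function) simp
  have "M_poly 1 (prod_map G w) = 0 \<longleftrightarrow> M_poly (\<chi> j. of_real (r$j)) w = 0" if "w \<in> tridisc" for w
  proof -
    have "norm (of_real (t$j) * w$j) < 1" for j
      using norm_mult_less[of "of_real (t$j)" 1 "w$j" 1] t_abs \<open>w \<in> tridisc\<close>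
      by (simp add: mem_tridisc_iff)
    then have D: "1 + of_real (t$j) * w$j \<noteq> 0" for j
      by (metis add_eq_0_iff norm_minus_cancel norm_one order.irrefl)
    have Gw: "prod_map G w $ j = (w$j + of_real (t$j)) / (1 + of_real (t$j) * w$j)" for j
      by (simp add: prod_map_def G_def Moebius_function_simple)
    have T: "complex_of_real (t$1) = of_real t1" "complex_of_real (t$2) = of_real t2"
      "complex_of_real (t$3) = of_real t3"
      by (simp_all add: t_def)
    have T_eq: "of_real t1 + of_real t2 + of_real t3
        = of_real t1 * of_real t2 + of_real t1 * of_real t3 + (of_real t2 * of_real t3 :: complex)"
      using arg_cong[OF t_eq, of complex_of_real] by simp
    have K: "(1 + of_real t1) * (1 - of_real t2 * of_real t3) = of_real \<kappa> * complex_of_real (r$1)"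
      "(1 + of_real t2) * (1 - of_real t1 * of_real t3) = of_real \<kappa> * complex_of_real (r$2)"
      "(1 + of_real t3) * (1 - of_real t1 * of_real t2) = of_real \<kappa> * complex_of_real (r$3)"
      using arg_cong[OF coeffs(1), of complex_of_real] arg_cong[OF coeffs(2), of complex_of_real]
        arg_cong[OF coeffs(3), of complex_of_real] by simp_all
    define E where "E = (1 + of_real t1 * w$1) * (1 + of_real t2 * w$2) * (1 + of_real t3 * w$3)"
    have "E \<noteq> 0"
      using D[of 1] D[of 2] D[of 3] by (simp add: E_def T)
    have "M_poly 1 (prod_map G w) = of_real \<kappa> * M_poly (\<chi> j. of_real (r$j)) w / E"
      using Moebius_triple_identity[OF T_eq, of "w$1" "w$2" "w$3"] D[of 1] D[of 2] D[of 3]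
      unfolding K E_def by (simp add: M_poly_def Gw T algebra_simps)
    with \<kappa> \<open>E \<noteq> 0\<close> show ?thesis
      by simp
  qed
  then have "prod_map G ` M_set (\<chi> j. of_real (r$j)) = M_set 1"
    using prod_map_mem_tridisc[of G, OF G] by (intro prod_map_image_eq G) (auto simp: M_set_eq)
  with G that show thesis by blast
qed

lemma prod_map_onto_M_set_one:
  assumes "triangle_ineq \<alpha>"
  obtains G where "\<And>j. disc_automorphism (G j)" "prod_map G ` M_set \<alpha> = M_set 1"
proof -
  define r where "r = (\<chi> j. norm (\<alpha>$j))"
  have tri: "r$1 < r$2 + r$3" "r$2 < r$1 + r$3" "r$3 < r$1 + r$2"
    using triangle_ineq_norms[OF assms] by (simp_all add: r_def)
  then have "\<alpha>$1 \<noteq> 0" "\<alpha>$2 \<noteq> 0" "\<alpha>$3 \<noteq> 0"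
    unfolding r_def by force+
  then have \<alpha>_nonzero: "\<alpha>$j \<noteq> 0" for j
    by (metis exhaust_3)
  obtain G\<^sub>1 where G\<^sub>1: "\<And>j. disc_automorphism (G\<^sub>1 j)"
    "prod_map G\<^sub>1 ` M_set \<alpha> = M_set (\<chi> j. of_real (norm (\<alpha>$j)))"
    using prod_map_rotation_onto_M_set_norms[OF \<alpha>_nonzero] by blast
  obtain G\<^sub>2 where G\<^sub>2: "\<And>j. disc_automorphism (G\<^sub>2 j)"
    "prod_map G\<^sub>2 ` M_set (\<chi> j. of_real (norm (\<alpha>$j))) = M_set 1"
    using prod_map_Moebius_onto_M_set_one[OF tri] unfolding r_def by auto
  show thesis
  proof
    show "disc_automorphism (G\<^sub>2 j \<circ> G\<^sub>1 j)" for j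
      by (intro disc_automorphism_comp G\<^sub>1 G\<^sub>2)
    show "prod_map (\<lambda>j. G\<^sub>2 j \<circ> G\<^sub>1 j) ` M_set \<alpha> = M_set 1"
      unfolding prod_map_comp image_comp[symmetric] G\<^sub>1(2) G\<^sub>2(2) ..
  qed
qed

theorem theorem1:
  fixes \<alpha> \<beta> :: "complex^3"
  assumes "triangle_ineq \<alpha>" and "triangle_ineq \<beta>"
  shows "\<exists>\<phi>\<in>Aut_tridisc. \<phi> ` M_set \<alpha> = M_set \<beta>"
proof -
  obtain Ga where Ga: "\<And>j. disc_automorphism (Ga j)" "prod_map Ga ` M_set \<alpha> = M_set 1"
    using prod_map_onto_M_set_one[OF assms(1)] by blast
  obtain Gb where Gb: "\<And>j. disc_automorphism (Gb j)" "prod_map Gb ` M_set \<beta> = M_set 1"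
    using prod_map_onto_M_set_one[OF assms(2)] by blast
  define H where "H j = inv_into disc (Gb j) \<circ> Ga j" for j
  have "disc_automorphism (H j)" for j
    unfolding H_def by (intro disc_automorphism_comp disc_automorphism_inv_into Ga Gb)
  moreover have "prod_map H ` M_set \<alpha> = M_set \<beta>"
    unfolding H_def prod_map_comp image_comp[symmetric] Ga(2) Gb(2)[symmetric]
    by (rule prod_map_inv_into_image[OF Gb(1)]) (auto simp: M_set_eq)
  ultimately show ?thesis
    using prod_map_in_Aut_tridisc by blast
qed

end
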